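(* Let $G$ be a topological group. Let $f\in L^0(G)$ and let $U$ be a neighbourhood of the identity in $L^0(G)$. Then there exist a finite subset $E\subseteq G$ and $m\in\mathbb N$ such that for every $n\in\mathbb N$ with $n\ge m$ one has $f\in U\,h_n(E^n)$.
   Context: Let $\lambda$ be Lebesgue measure on $[0,1]$. A map $f\colon [0,1]\to G$ is strongly $\lambda$-measurable if for every $\epsilon>0$ there is a closed $A\subseteq[0,1]$ with $\lambda([0,1]\setminus A)\le\epsilon$ and $f|_A$ continuous. $L^{0}(G)$ is the set of $\lambda$-a.e. equivalence classes of strongly $\lambda$-measurable maps $[0,1]\to G$, with pointwise group operations and the topology of convergence in measure: a neighbourhood basis of the identity consists of the sets $N(U,\epsilon)=\{f : \lambda(\{x: f(x)\notin U\})<\epsilon\}$, $U$ an open identity neighbourhood in $G$, $\epsilon>0$. For $n\ge1$, $h_n\colon G^n\to L^0(G)$ sends $g=(g_1,\dots,g_n)$ to the map which is constantly $g_i$ on $[(i-1)/n,i/n)$ for $i=1,\dots,n$. *)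

theory Defs
  imports "HOL-Analysis.Analysis"
begin

text \<open>Topological groups are written additively via the type class topological_group_add
  (group_add is not assumed commutative). Elements of L0(G) are represented by
  strongly measurable representatives; equality in L0(G) is equality a.e. on [0,1].\<close>

definition strongly_measurable :: "(real \<Rightarrow> 'a::topological_space) \<Rightarrow> bool" where
  "strongly_measurable f \<longleftrightarrow>
     (\<forall>\<epsilon>>0. \<exists>A. closed A \<and> A \<subseteq> {0..1} \<and>
        measure lebesgue ({0..1} - A) \<le> \<epsilon> \<and> continuous_on A f)"

definition L0_nbhd :: "'a::topological_group_add set \<Rightarrow> real \<Rightarrow> (real \<Rightarrow> 'a) set" where
  "L0_nbhd V \<epsilon> = {g. strongly_measurable g \<and> measure lebesgue {x\<in>{0..1}. g x \<notin> V} < \<epsilon>}"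

definition L0_identity_nbhd :: "(real \<Rightarrow> 'a::topological_group_add) set \<Rightarrow> bool" where
  "L0_identity_nbhd U \<longleftrightarrow> U \<subseteq> {g. strongly_measurable g} \<and>
     (\<exists>V \<epsilon>. open V \<and> 0 \<in> V \<and> \<epsilon> > 0 \<and> L0_nbhd V \<epsilon> \<subseteq> U)"

text \<open>h_n: the tuple g = [g_1,...,g_n] (a list of length n) is sent to the step map
  which is constantly g_i on [(i-1)/n, i/n).\<close>
definition step_map :: "nat \<Rightarrow> 'a list \<Rightarrow> real \<Rightarrow> 'a" where
  "step_map n g x = g ! min (nat \<lfloor>x * real n\<rfloor>) (n - 1)"

definition tuples :: "'a set \<Rightarrow> nat \<Rightarrow> 'a list set" where
  "tuples E n = {g. length g = n \<and> set g \<subseteq> E}"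

end

theory Submission
  imports Defs
begin

text \<open>A strongly measurable f is continuous on a closed A \<subseteq> [0,1] of almost full measure, and on
  the compact set A it is uniformly close, up to the identity neighbourhood V, to finitely many of
  its own values f a. Once 1/n is below the Lebesgue number of this cover, every cell
  [(i-1)/n, i/n) meeting A can be assigned one such value, so f minus the resulting step map
  lies in V on all of A, hence in N(V,\<epsilon>).\<close>

definition step_index :: "nat \<Rightarrow> real \<Rightarrow> nat" where
  "step_index n x = min (nat \<lfloor>x * real n\<rfloor>) (n - 1)"

lemma step_map_eq_nth: "step_map n g x = g ! step_index n x"
  unfolding step_map_def step_index_def by simp

lemma step_index_less: "n \<ge> 1 \<Longrightarrow> step_index n x < n"
  unfolding step_index_def by auto

lemma step_index_bounds:
  assumes "n \<ge> 1" "x \<in> {0..1}"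
  shows "real (step_index n x) / n \<le> x \<and> x \<le> (real (step_index n x) + 1) / n"
proof (cases "nat \<lfloor>x * real n\<rfloor> \<le> n - 1")
  case True
  then have k: "step_index n x = nat \<lfloor>x * real n\<rfloor>" unfolding step_index_def by simp
  have "x * real n \<ge> 0" using assms by auto
  then have "real (nat \<lfloor>x * real n\<rfloor>) \<le> x * n" "x * n \<le> real (nat \<lfloor>x * real n\<rfloor>) + 1"
    by linarith+
  then show ?thesis using assms k by (simp add: field_simps)
next
  case False
  then have "x * real n \<ge> n" by linarith
  then have "x = 1" using assms by (simp add: mult_le_cancel_right2)
  moreover have "step_index n x = n - 1" using False unfolding step_index_def by simp
  ultimately show ?thesis using assms by (simp add: field_simps of_nat_diff)
qed

lemma dist_le_if_step_index_eq:
  assumes "n \<ge> 1" "x \<in> {0..1}" "y \<in> {0..1}" "step_index n x = step_index n y"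
  shows "dist x y \<le> 1 / n"
  using step_index_bounds[OF assms(1,2)] step_index_bounds[OF assms(1,3)] assms(4)
  by (simp add: dist_real_def add_divide_distrib abs_le_iff)

lemma isCont_step_map:
  assumes "x * real n \<notin> \<int>"
  shows "isCont (step_map n g) x"
proof -
  have "((\<lambda>y. y * real n) \<longlongrightarrow> x * real n) (at x)"
    by (intro tendsto_intros)
  then have "\<forall>\<^sub>F y in at x. \<lfloor>y * real n\<rfloor> = \<lfloor>x * real n\<rfloor>"
    using assms by (rule eventually_floor_eq)
  then have "\<forall>\<^sub>F y in at x. step_map n g y = step_map n g x"
    by eventually_elim (simp add: step_map_def)
  then show ?thesis
    unfolding isCont_def by (rule tendsto_eventually)
qed

lemma strongly_measurable_diff:
  fixes f s :: "real \<Rightarrow> 'a::topological_group_add"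
  assumes "strongly_measurable f" "strongly_measurable s"
  shows "strongly_measurable (\<lambda>x. f x - s x)"
  unfolding strongly_measurable_def
proof (intro allI impI)
  fix e :: real assume "e > 0"
  then obtain A1 A2 where
    A1: "closed A1" "A1 \<subseteq> {0..1}" "measure lebesgue ({0..1} - A1) \<le> e/2" "continuous_on A1 f" and
    A2: "closed A2" "A2 \<subseteq> {0..1}" "measure lebesgue ({0..1} - A2) \<le> e/2" "continuous_on A2 s"
    using assms half_gt_zero unfolding strongly_measurable_def by metis
  have "measure lebesgue ({0..1} - (A1 \<inter> A2))
          \<le> measure lebesgue ({0..1} - A1) + measure lebesgue ({0..1} - A2)"
    unfolding Diff_Int by (rule measure_Un_le) (use A1 A2 in auto)
  moreover have "continuous_on (A1 \<inter> A2) (\<lambda>x. f x - s x)"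
    by (intro continuous_on_diff; rule continuous_on_subset) (use A1 A2 in auto)
  ultimately show "\<exists>A. closed A \<and> A \<subseteq> {0..1} \<and> measure lebesgue ({0..1} - A) \<le> e \<and>
                     continuous_on A (\<lambda>x. f x - s x)"
    using A1 A2 by (intro exI[of _ "A1 \<inter> A2"]) auto
qed

lemma strongly_measurable_if_isCont_off_finite:
  assumes "finite S" "\<And>x. x \<in> {0..1} - S \<Longrightarrow> isCont f x"
  shows "strongly_measurable f"
  unfolding strongly_measurable_def
proof (intro allI impI)
  fix e :: real assume e: "e > 0"
  define \<eta> where "\<eta> = e / (2 * (card S + 1))"
  have \<eta>: "\<eta> > 0" using e by (simp add: \<eta>_def)
  define A where "A = {0..1} - (\<Union>p\<in>S. {p - \<eta> <..< p + \<eta>})"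
  have "closed A" unfolding A_def by (intro closed_Diff open_UN) auto
  moreover have "A \<subseteq> {0..1}" unfolding A_def by auto
  moreover have "continuous_on A f"
    by (rule continuous_at_imp_continuous_on) (use assms(2) \<eta> in \<open>force simp: A_def\<close>)
  moreover have "measure lebesgue ({0..1} - A) \<le> e"
  proof -
    have "measure lebesgue ({0..1} - A) \<le> measure lebesgue (\<Union>p\<in>S. {p - \<eta> <..< p + \<eta>})"
      by (rule measure_mono_fmeasurable)
        (use assms(1) \<open>closed A\<close> in \<open>auto simp: A_def borel_closed\<close>)
    also have "\<dots> \<le> (\<Sum>p\<in>S. measure lebesgue {p - \<eta> <..< p + \<eta>})"
      by (rule measure_UNION_le) (use assms(1) in auto)
    also have "\<dots> = card S * (2 * \<eta>)" using \<eta> by simp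
    also have "\<dots> \<le> e" using e by (simp add: \<eta>_def field_simps)
    finally show ?thesis .
  qed
  ultimately show "\<exists>A. closed A \<and> A \<subseteq> {0..1} \<and> measure lebesgue ({0..1} - A) \<le> e \<and>
                     continuous_on A f"
    by blast
qed

lemma strongly_measurable_step_map:
  assumes "n > 0"
  shows "strongly_measurable (step_map n g)"
proof (rule strongly_measurable_if_isCont_off_finite)
  show "finite ((\<lambda>j. real j / n) ` {0..n})" by simp
  fix x assume x: "x \<in> {0..1} - (\<lambda>j. real j / n) ` {0..n}"
  show "isCont (step_map n g) x"
  proof (rule isCont_step_map, rule notI)
    assume "x * real n \<in> \<int>"
    then obtain k where k: "x * real n = of_int k" by (auto elim: Ints_cases)
    have "x * real n \<le> n" "x * real n \<ge> 0" using x by (auto simp: mult_left_le_one_le)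
    then have "0 \<le> k" "k \<le> n" unfolding k by linarith+
    with k assms x show False
      by (auto simp: field_simps intro!: image_eqI[of _ _ "nat k"])
  qed
qed

lemma L0_nbhdI:
  assumes "strongly_measurable u" "closed A" "measure lebesgue ({0..1} - A) < \<epsilon>"
    and "\<And>x. x \<in> A \<Longrightarrow> u x \<in> V"
  shows "u \<in> L0_nbhd V \<epsilon>"
proof -
  have "{x \<in> {0..1}. u x \<notin> V} \<subseteq> {0..1} - A" using assms(4) by auto
  then have "measure lebesgue {x \<in> {0..1}. u x \<notin> V} \<le> measure lebesgue ({0..1} - A)"
  proof (cases "{x \<in> {0..1}. u x \<notin> V} \<in> sets lebesgue")
    case True
    then show ?thesis
      by (rule measure_mono_fmeasurable[OF \<open>_ \<subseteq> _\<close>]) (use assms(2) in \<open>auto intro: fmeasurable_Diff\<close>)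
  qed (simp add: measure_notin_sets)
  then show ?thesis using assms(1,3) unfolding L0_nbhd_def by simp
qed

lemma continuous_on_compact_finite_net:
  fixes f :: "'b::metric_space \<Rightarrow> 'a::topological_group_add"
  assumes "compact A" "continuous_on A f" "open V" "0 \<in> V"
  obtains F d where "finite F" "F \<subseteq> A" "d > 0"
    "\<And>x. x \<in> A \<Longrightarrow> \<exists>a\<in>F. \<forall>y\<in>A. dist x y < d \<longrightarrow> f y - f a \<in> V"
proof -
  have "\<exists>N. open N \<and> a \<in> N \<and> (\<forall>y\<in>A. y \<in> N \<longrightarrow> f y - f a \<in> V)" if a: "a \<in> A" for a
  proof -
    have "open ((\<lambda>z. z - f a) -` V)" by (intro open_vimage assms(3) continuous_intros)
    moreover have "f a \<in> (\<lambda>z. z - f a) -` V" using assms(4) by simp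
    ultimately show ?thesis using assms(2) a unfolding continuous_on_topological by fastforce
  qed
  then obtain N where N: "\<And>a. a \<in> A \<Longrightarrow> open (N a) \<and> a \<in> N a \<and> (\<forall>y\<in>A. y \<in> N a \<longrightarrow> f y - f a \<in> V)"
    by metis
  obtain F where F: "F \<subseteq> A" "finite F" "A \<subseteq> \<Union>(N ` F)"
    by (rule compactE_image[OF assms(1), of A N]) (use N in auto)
  obtain d where "d > 0" "\<And>x. x \<in> A \<Longrightarrow> \<exists>G \<in> N ` F. ball x d \<subseteq> G"
    by (rule Heine_Borel_lemma[OF assms(1) F(3)]) (use N F(1) in auto)
  then show ?thesis
    using that[OF F(2,1)] N F(1) by (fastforce simp: subset_iff)
qed

lemma step_map_approx_continuous_on:
  fixes f :: "real \<Rightarrow> 'a::topological_group_add"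
  assumes "compact A" "A \<subseteq> {0..1}" "continuous_on A f" "open V" "0 \<in> V"
  obtains E m where "finite E"
    "\<And>n. n \<ge> m \<Longrightarrow> n \<ge> 1 \<Longrightarrow> \<exists>g\<in>tuples E n. \<forall>x\<in>A. f x - step_map n g x \<in> V"
proof -
  obtain F d where F: "finite F" "F \<subseteq> A" and "d > 0"
    and net: "\<And>x. x \<in> A \<Longrightarrow> \<exists>a\<in>F. \<forall>y\<in>A. dist x y < d \<longrightarrow> f y - f a \<in> V"
    using continuous_on_compact_finite_net[OF assms(1,3-5)] by blast
  obtain a where a: "\<And>x. x \<in> A \<Longrightarrow> a x \<in> F \<and> (\<forall>y\<in>A. dist x y < d \<longrightarrow> f y - f (a x) \<in> V)"
    using net by metis
  obtain m :: nat where m: "m > 0" "inverse (real m) < d"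
    using ex_inverse_of_nat_less \<open>d > 0\<close> by blast
  define E where "E = f ` F \<union> {0}"
  have "\<exists>g\<in>tuples E n. \<forall>x\<in>A. f x - step_map n g x \<in> V" if n: "n \<ge> m" "n \<ge> 1" for n
  proof -
    let ?cell = "\<lambda>k x. x \<in> A \<and> step_index n x = k"
    define c where "c k = (if \<exists>x. ?cell k x then f (a (SOME x. ?cell k x)) else 0)" for k
    define g where "g = map c [0..<n]"
    have "c k \<in> E" for k
      using someI_ex[of "?cell k"] a unfolding c_def E_def by auto
    then have "g \<in> tuples E n" unfolding tuples_def g_def by auto
    moreover have "f y - step_map n g y \<in> V" if y: "y \<in> A" for y
    proof -
      define x where "x = (SOME x. ?cell (step_index n y) x)"
      have x: "?cell (step_index n y) x" unfolding x_def by (rule someI_ex) (use y in auto)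
      have "1 / real n \<le> inverse (real m)" using n m by (simp add: inverse_eq_divide frac_le)
      then have "1 / real n < d" using m(2) by linarith
      then have "dist x y < d"
        using dist_le_if_step_index_eq[of n x y] n(2) x y assms(2) by force
      moreover have "step_map n g y = f (a x)"
        using step_index_less[OF n(2)] y unfolding step_map_eq_nth g_def c_def x_def by auto
      ultimately show ?thesis using a x y by auto
    qed
    ultimately show ?thesis by blast
  qed
  moreover have "finite E" unfolding E_def using F(1) by simp
  ultimately show ?thesis using that by blast
qed

theorem lemma4p1:
  fixes f :: "real \<Rightarrow> 'a::topological_group_add"
    and U :: "(real \<Rightarrow> 'a) set"
  assumes "strongly_measurable f"
    and "L0_identity_nbhd U"
  shows "\<exists>E m. finite E \<and>
           (\<forall>n. n \<ge> m \<and> n \<ge> 1 \<longrightarrow>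
              (\<exists>u\<in>U. \<exists>g\<in>tuples E n.
                 AE x in lebesgue_on {0..1}. f x = u x + step_map n g x))"
proof -
  obtain V \<epsilon> where V: "open V" "0 \<in> V" "\<epsilon> > 0" "L0_nbhd V \<epsilon> \<subseteq> U"
    using assms(2) unfolding L0_identity_nbhd_def by blast
  obtain A where A: "closed A" "A \<subseteq> {0..1}" "measure lebesgue ({0..1} - A) \<le> \<epsilon>/2"
    "continuous_on A f"
    using assms(1) V(3) unfolding strongly_measurable_def by (meson half_gt_zero)
  have "compact A" using A(1,2) by (metis bounded_closed_interval bounded_subset compact_eq_bounded_closed)
  then obtain E m where "finite E"
    and approx: "\<And>n. n \<ge> m \<Longrightarrow> n \<ge> 1 \<Longrightarrow> \<exists>g\<in>tuples E n. \<forall>x\<in>A. f x - step_map n g x \<in> V"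
    using step_map_approx_continuous_on A(2,4) V(1,2) by metis
  have "\<exists>u\<in>U. \<exists>g\<in>tuples E n. AE x in lebesgue_on {0..1}. f x = u x + step_map n g x"
    if n: "n \<ge> m" "n \<ge> 1" for n
  proof -
    obtain g where g: "g \<in> tuples E n" "\<forall>x\<in>A. f x - step_map n g x \<in> V"
      using approx[OF n] by blast
    have "strongly_measurable (\<lambda>x. f x - step_map n g x)"
      using strongly_measurable_diff[OF assms(1) strongly_measurable_step_map] n(2) by simp
    then have "(\<lambda>x. f x - step_map n g x) \<in> U"
      using L0_nbhdI[OF _ A(1)] A(3) V(3,4) g(2) by fastforce
    then show ?thesis using g(1) by force
  qed
  with \<open>finite E\<close> show ?thesis by blast
qed

end
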